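(* For each $n\ge 2$, the monoids $\mathrm{Cat}_n$, $\mathrm{Styl}_n$, and $\mathrm{Kis}_n$ satisfy the same monoid identities.
   Context: A monoid identity is a formal equality $w=w'$ of words $w,w'$ in the free monoid $X^*$ over an alphabet $X$; it holds in a monoid $M$ if $w\varphi=w'\varphi$ for every homomorphism $\varphi\colon X^*\to M$. The stylic monoid $\mathrm{Styl}_n$ is generated by $a_1,\dots,a_n$ subject to: $a_i^2=a_i$ ($1\le i\le n$); $a_ja_ia_k=a_ja_ka_i$ and $a_ia_ka_j=a_ka_ia_j$ for $1\le i<j<k\le n$; $a_ja_ia_i=a_ia_ja_i$ and $a_ja_ja_i=a_ja_ia_j$ for $1\le i<j\le n$. The Kiselman monoid $\mathrm{Kis}_n$ is generated by $a_1,\dots,a_n$ subject to: $a_i^2=a_i$ ($1\le i\le n$); $a_ia_ja_i=a_ja_ia_j=a_ja_i$ for $1\le i<j\le n$. The Catalan monoid $\mathrm{Cat}_n$ is generated by $a_1,\dots,a_n$ subject to: $a_i^2=a_i$ ($1\le i\le n$); $a_ia_k=a_ka_i$ if $|i-k|\ge2$; $a_ia_{i+1}a_i=a_{i+1}a_ia_{i+1}=a_{i+1}a_i$ for $1\le i\le n-1$. *)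

theory Defs
  imports Main
begin

text \<open>Monoids given by presentations: words over the generators a_1..a_n are
  lists of naturals in {1..n}; the monoid is the quotient of the free monoid by the
  congruence generated by the defining relations R.\<close>

inductive pres_eq :: "(nat list \<times> nat list) set \<Rightarrow> nat list \<Rightarrow> nat list \<Rightarrow> bool"
  for R where
  refl: "pres_eq R u u"
| rel: "(l, r) \<in> R \<Longrightarrow> pres_eq R (p @ l @ q) (p @ r @ q)"
| sym: "pres_eq R u v \<Longrightarrow> pres_eq R v u"
| trans: "pres_eq R u v \<Longrightarrow> pres_eq R v w \<Longrightarrow> pres_eq R u w"

definition styl_rel :: "nat \<Rightarrow> (nat list \<times> nat list) set" where
  "styl_rel n =
     {([i, i], [i]) | i. 1 \<le> i \<and> i \<le> n}
   \<union> {([j, i, k], [j, k, i]) | i j k. 1 \<le> i \<and> i < j \<and> j < k \<and> k \<le> n}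
   \<union> {([i, k, j], [k, i, j]) | i j k. 1 \<le> i \<and> i < j \<and> j < k \<and> k \<le> n}
   \<union> {([j, i, i], [i, j, i]) | i j. 1 \<le> i \<and> i < j \<and> j \<le> n}
   \<union> {([j, j, i], [j, i, j]) | i j. 1 \<le> i \<and> i < j \<and> j \<le> n}"

definition kis_rel :: "nat \<Rightarrow> (nat list \<times> nat list) set" where
  "kis_rel n =
     {([i, i], [i]) | i. 1 \<le> i \<and> i \<le> n}
   \<union> {([i, j, i], [j, i]) | i j. 1 \<le> i \<and> i < j \<and> j \<le> n}
   \<union> {([j, i, j], [j, i]) | i j. 1 \<le> i \<and> i < j \<and> j \<le> n}"

definition cat_rel :: "nat \<Rightarrow> (nat list \<times> nat list) set" where
  "cat_rel n =
     {([i, i], [i]) | i. 1 \<le> i \<and> i \<le> n}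
   \<union> {([i, k], [k, i]) | i k. 1 \<le> i \<and> i \<le> n \<and> 1 \<le> k \<and> k \<le> n
                              \<and> (i + 2 \<le> k \<or> k + 2 \<le> i)}
   \<union> {([i, i + 1, i], [i + 1, i]) | i. 1 \<le> i \<and> i \<le> n - 1}
   \<union> {([i + 1, i, i + 1], [i + 1, i]) | i. 1 \<le> i \<and> i \<le> n - 1}"

definition identity_holds ::
  "(nat list \<times> nat list) set \<Rightarrow> nat \<Rightarrow> 'x list \<Rightarrow> 'x list \<Rightarrow> bool" where
  "identity_holds R n w w' \<longleftrightarrow>
     (\<forall>\<sigma> :: 'x \<Rightarrow> nat list. (\<forall>x. set (\<sigma> x) \<subseteq> {1..n}) \<longrightarrow>
        pres_eq R (concat (map \<sigma> w)) (concat (map \<sigma> w')))"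

end

theory Submission
  imports Defs "HOL-Library.Sublist"
begin

text \<open>Every relation of Kis_n holds in Styl_n and every relation of Styl_n holds in Cat_n,
  so identities of Kis_n hold in Styl_n and identities of Styl_n hold in Cat_n. To close
  the cycle, let w = w' hold in Cat_n. The monoid Cat_n acts on the points 1..n+1 by
  letting a_i move i+1 to i; for every word s of length at most n there is a substitution
  under which the image of the point n+1 records how long a prefix of s embeds greedily
  into a word. Hence w and w' have the same subsequences of length at most n, and so do
  all their images under substitutions into the generators of Kis_n. Such images are
  equal in Kis_n: the set of strictly decreasing subsequences of a word is invariant
  under the Kiselman relations, every word is equivalent to a reduced one (between two
  consecutive occurrences of a letter there are both a smaller and a larger letter), and a
  reduced word is determined by its decreasing subsequences, which all have length at
  most n.\<close>

declare pres_eq.trans [trans]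

lemma pres_eq_append_context: "pres_eq R u v \<Longrightarrow> pres_eq R (p @ u @ q) (p @ v @ q)"
proof (induction arbitrary: p q rule: pres_eq.induct)
  case (refl u)
  then show ?case by (rule pres_eq.refl)
next
  case (rel l r p' q')
  have "pres_eq R ((p @ p') @ l @ (q' @ q)) ((p @ p') @ r @ (q' @ q))"
    using rel by (rule pres_eq.rel)
  then show ?case by simp
next
  case (sym u v)
  then show ?case by (blast intro: pres_eq.sym)
next
  case (trans u v w)
  then show ?case by (blast intro: pres_eq.trans)
qed

lemma pres_eq_relation_in_context:
  "(l, r) \<in> R \<Longrightarrow> u = p @ l @ q \<Longrightarrow> v = p @ r @ q \<Longrightarrow> pres_eq R u v"
  using pres_eq.rel by blast

lemma pres_eq_relation: "(l, r) \<in> R \<Longrightarrow> pres_eq R l r"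
  by (rule pres_eq_relation_in_context[where p = "[]" and q = "[]"]) simp_all

lemma pres_eq_mono:
  assumes "\<And>l r. (l, r) \<in> R1 \<Longrightarrow> pres_eq R2 l r"
  shows "pres_eq R1 u v \<Longrightarrow> pres_eq R2 u v"
proof (induction rule: pres_eq.induct)
  case (refl u)
  then show ?case by (rule pres_eq.refl)
next
  case (rel l r p q)
  then show ?case using assms pres_eq_append_context by blast
next
  case (sym u v)
  then show ?case by (blast intro: pres_eq.sym)
next
  case (trans u v w)
  then show ?case by (blast intro: pres_eq.trans)
qed

lemma identity_holds_mono:
  assumes "\<And>l r. (l, r) \<in> R1 \<Longrightarrow> pres_eq R2 l r"
  shows "identity_holds R1 n w w' \<Longrightarrow> identity_holds R2 n w w'"
  unfolding identity_holds_def using pres_eq_mono[OF assms] by blast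

section \<open>Kis_n, Styl_n, Cat_n as successive quotients\<close>

lemma kis_rel_holds_in_styl: "(l, r) \<in> kis_rel n \<Longrightarrow> pres_eq (styl_rel n) l r"
proof -
  assume "(l, r) \<in> kis_rel n"
  then consider (idem) i where "l = [i, i]" "r = [i]" "1 \<le> i" "i \<le> n"
    | (iji) i j where "l = [i, j, i]" "r = [j, i]" "1 \<le> i" "i < j" "j \<le> n"
    | (jij) i j where "l = [j, i, j]" "r = [j, i]" "1 \<le> i" "i < j" "j \<le> n"
    unfolding kis_rel_def by blast
  then show ?thesis
  proof cases
    case idem
    then show ?thesis by (intro pres_eq_relation) (auto simp: styl_rel_def)
  next
    case iji
    have "pres_eq (styl_rel n) [i, j, i] [j, i, i]"
      using iji by (intro pres_eq_relation[THEN pres_eq.sym]) (auto simp: styl_rel_def)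
    also have "pres_eq (styl_rel n) \<dots> [j, i]"
      using iji by (intro pres_eq_relation_in_context[where p = "[j]" and q = "[]"])
        (auto simp: styl_rel_def)
    finally show ?thesis using iji by simp
  next
    case jij
    have "pres_eq (styl_rel n) [j, i, j] [j, j, i]"
      using jij by (intro pres_eq_relation[THEN pres_eq.sym]) (auto simp: styl_rel_def)
    also have "pres_eq (styl_rel n) \<dots> [j, i]"
      using jij by (intro pres_eq_relation_in_context[where p = "[]" and q = "[i]"])
        (auto simp: styl_rel_def)
    finally show ?thesis using jij by simp
  qed
qed

lemma cat_idem:
  "1 \<le> i \<Longrightarrow> i \<le> n \<Longrightarrow> pres_eq (cat_rel n) (p @ [i, i] @ q) (p @ [i] @ q)"
  by (rule pres_eq.rel) (auto simp: cat_rel_def)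

lemma cat_commute:
  "1 \<le> i \<Longrightarrow> k \<le> n \<Longrightarrow> i + 2 \<le> k \<Longrightarrow>
    pres_eq (cat_rel n) (p @ [i, k] @ q) (p @ [k, i] @ q)"
  by (rule pres_eq.rel) (auto simp: cat_rel_def)

lemma cat_iji:
  assumes "1 \<le> i" "i < j" "j \<le> n"
  shows "pres_eq (cat_rel n) [i, j, i] [j, i]"
proof (cases "j = i + 1")
  case True
  then show ?thesis using assms by (intro pres_eq_relation) (auto simp: cat_rel_def)
next
  case False
  have "pres_eq (cat_rel n) [i, j, i] [j, i, i]"
    using cat_commute[of i j n "[]" "[i]"] assms False by simp
  also have "pres_eq (cat_rel n) \<dots> [j, i]"
    using cat_idem[of i n "[j]" "[]"] assms by simp
  finally show ?thesis .
qed

lemma cat_jij: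
  assumes "1 \<le> i" "i < j" "j \<le> n"
  shows "pres_eq (cat_rel n) [j, i, j] [j, i]"
proof (cases "j = i + 1")
  case True
  then show ?thesis using assms by (intro pres_eq_relation) (auto simp: cat_rel_def)
next
  case False
  have "pres_eq (cat_rel n) [j, i, j] [j, j, i]"
    using cat_commute[of i j n "[j]" "[]"] assms False by simp
  also have "pres_eq (cat_rel n) \<dots> [j, i]"
    using cat_idem[of j n "[]" "[i]"] assms by simp
  finally show ?thesis .
qed

lemma styl_rel_holds_in_cat: "(l, r) \<in> styl_rel n \<Longrightarrow> pres_eq (cat_rel n) l r"
proof -
  assume "(l, r) \<in> styl_rel n"
  then consider (idem) i where "l = [i, i]" "r = [i]" "1 \<le> i" "i \<le> n"
    | (jik) i j k where "l = [j, i, k]" "r = [j, k, i]" "1 \<le> i" "i < j" "j < k" "k \<le> n"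
    | (ikj) i j k where "l = [i, k, j]" "r = [k, i, j]" "1 \<le> i" "i < j" "j < k" "k \<le> n"
    | (jii) i j where "l = [j, i, i]" "r = [i, j, i]" "1 \<le> i" "i < j" "j \<le> n"
    | (jji) i j where "l = [j, j, i]" "r = [j, i, j]" "1 \<le> i" "i < j" "j \<le> n"
    unfolding styl_rel_def by blast
  then show ?thesis
  proof cases
    case idem
    then show ?thesis using cat_idem[of i n "[]" "[]"] by simp
  next
    case jik
    then show ?thesis using cat_commute[of i k n "[j]" "[]"] by simp
  next
    case ikj
    then show ?thesis using cat_commute[of i k n "[]" "[j]"] by simp
  next
    case jii
    have "pres_eq (cat_rel n) [j, i, i] [j, i]"
      using cat_idem[of i n "[j]" "[]"] jii by simp
    also have "pres_eq (cat_rel n) \<dots> [i, j, i]"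
      using pres_eq.sym[OF cat_iji] jii by simp
    finally show ?thesis using jii by simp
  next
    case jji
    have "pres_eq (cat_rel n) [j, j, i] [j, i]"
      using cat_idem[of j n "[]" "[i]"] jji by simp
    also have "pres_eq (cat_rel n) \<dots> [j, i, j]"
      using pres_eq.sym[OF cat_jij] jji by simp
    finally show ?thesis using jji by simp
  qed
qed

section \<open>Identities of Cat_n see subsequences of length at most n\<close>

definition cat_act :: "nat \<Rightarrow> nat \<Rightarrow> nat" where
  "cat_act i p = (if p = Suc i then i else p)"

lemma cat_act_Suc [simp]: "cat_act i (Suc i) = i"
  by (simp add: cat_act_def)

lemma cat_act_fixed [simp]: "p \<noteq> Suc i \<Longrightarrow> cat_act i p = p"
  by (simp add: cat_act_def)

lemma fold_cat_act_relation: "(l, r) \<in> cat_rel n \<Longrightarrow> fold cat_act l = fold cat_act r"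
  unfolding cat_rel_def by (auto simp: fun_eq_iff cat_act_def)

lemma fold_cat_act_pres_eq: "pres_eq (cat_rel n) u v \<Longrightarrow> fold cat_act u = fold cat_act v"
proof (induction rule: pres_eq.induct)
  case (rel l r p q)
  then show ?case using fold_cat_act_relation[OF rel] by simp
qed simp_all

lemma fold_cat_act_fixed: "\<forall>x\<in>set u. p \<le> x \<Longrightarrow> fold cat_act u p = p"
  by (induction u) auto

lemma fold_cat_act_sorted:
  "sorted_wrt (<) u \<Longrightarrow> fold cat_act u (Suc p) = (if p \<in> set u then p else Suc p)"
proof (induction u)
  case Nil
  then show ?case by simp
next
  case (Cons i u)
  show ?case
  proof (cases "p = i")
    case True
    have "fold cat_act u i = i" using Cons.prems by (intro fold_cat_act_fixed) auto
    then show ?thesis using True by simp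
  next
    case False
    then show ?thesis using Cons by auto
  qed
qed

fun greedy_match :: "'x list \<Rightarrow> nat \<Rightarrow> 'x list \<Rightarrow> nat" where
  "greedy_match s j [] = j"
| "greedy_match s j (x # u) =
     greedy_match s (if j < length s \<and> s ! j = x then Suc j else j) u"

lemma greedy_match_le: "j \<le> length s \<Longrightarrow> greedy_match s j u \<le> length s"
  by (induction u arbitrary: j) auto

lemma greedy_match_length: "greedy_match s (length s) u = length s"
  by (induction u) auto

lemma greedy_match_eq_length_iff:
  "j \<le> length s \<Longrightarrow> greedy_match s j u = length s \<longleftrightarrow> subseq (drop j s) u"
proof (induction u arbitrary: j)
  case Nil
  then show ?case by (auto dest!: list_emb_Nil2)
next
  case (Cons x u)
  show ?case
  proof (cases "j < length s")
    case True
    then have "drop j s = s ! j # drop (Suc j) s" by (simp add: Cons_nth_drop_Suc)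
    then show ?thesis using Cons.IH[of "Suc j"] Cons.IH[of j] True by auto
  next
    case False
    then show ?thesis using Cons.prems greedy_match_length by simp
  qed
qed

definition position_word :: "nat \<Rightarrow> 'x list \<Rightarrow> 'x \<Rightarrow> nat list" where
  "position_word n s x = sorted_list_of_set {n - j | j. j < length s \<and> s ! j = x}"

lemma set_position_word: "set (position_word n s x) = {n - j | j. j < length s \<and> s ! j = x}"
  unfolding position_word_def by (subst set_sorted_list_of_set) auto

lemma sorted_position_word: "sorted_wrt (<) (position_word n s x)"
  unfolding position_word_def by simp

lemma position_word_range: "length s \<le> n \<Longrightarrow> set (position_word n s x) \<subseteq> {1..n}"
  unfolding set_position_word by auto

text \<open>The point n + 1 - j encodes that the first j letters of s have been matched: the
  image of letter x moves it one step down exactly when x is the next letter s ! j.\<close>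

lemma fold_cat_act_position_word:
  assumes "j \<le> length s" "length s \<le> n"
  shows "fold cat_act (concat (map (position_word n s) u)) (Suc n - j)
    = Suc n - greedy_match s j u"
  using assms(1)
proof (induction u arbitrary: j)
  case Nil
  then show ?case by simp
next
  case (Cons x u)
  let ?j' = "if j < length s \<and> s ! j = x then Suc j else j"
  have match: "n - j \<in> set (position_word n s x) \<longleftrightarrow> j < length s \<and> s ! j = x"
  proof
    assume "n - j \<in> set (position_word n s x)"
    then obtain j' where "n - j = n - j'" "j' < length s" "s ! j' = x"
      unfolding set_position_word by blast
    moreover from this have "j' = j" using Cons.prems assms(2) by simp
    ultimately show "j < length s \<and> s ! j = x" by simp
  qed (auto simp: set_position_word)
  have suc: "Suc n - j = Suc (n - j)" using Cons.prems assms(2) by simp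
  have "fold cat_act (position_word n s x) (Suc n - j) = Suc n - ?j'"
    unfolding suc fold_cat_act_sorted[OF sorted_position_word] match
    using Cons.prems assms(2) by auto
  then show ?case using Cons.IH[of ?j'] Cons.prems assms(2) by auto
qed

lemma cat_identity_subseq_iff:
  assumes "identity_holds (cat_rel n) n w w'" and "length s \<le> n"
  shows "subseq s w \<longleftrightarrow> subseq s w'"
proof -
  have "\<forall>x. set (position_word n s x) \<subseteq> {1..n}"
    using position_word_range[OF assms(2)] by blast
  then have "pres_eq (cat_rel n)
      (concat (map (position_word n s) w)) (concat (map (position_word n s) w'))"
    using assms(1) unfolding identity_holds_def by blast
  then have "fold cat_act (concat (map (position_word n s) w)) (Suc n - 0)
      = fold cat_act (concat (map (position_word n s) w')) (Suc n - 0)"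
    by (rule fold_cat_act_pres_eq[THEN fun_cong])
  then have "Suc n - greedy_match s 0 w = Suc n - greedy_match s 0 w'"
    using assms(2) by (simp only: fold_cat_act_position_word le0)
  moreover have "greedy_match s 0 w \<le> length s" "greedy_match s 0 w' \<le> length s"
    using greedy_match_le by auto
  ultimately have "greedy_match s 0 w = greedy_match s 0 w'" using assms(2) by simp
  then show ?thesis
    using greedy_match_eq_length_iff[of 0 s w] greedy_match_eq_length_iff[of 0 s w'] by simp
qed

section \<open>Short subsequences under substitution\<close>

lemma subseq_concat_map: "subseq v u \<Longrightarrow> subseq (concat (map f v)) (concat (map f u))"
proof (induction rule: list_emb.induct)
  case (list_emb_Nil ys)
  then show ?case by simp
next
  case (list_emb_Cons xs ys y)
  then show ?case by (simp add: list_emb_append2)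
next
  case (list_emb_Cons2 x y xs ys)
  then show ?case by (simp add: list_emb_append_mono)
qed

lemma subseq_concat_mapE:
  assumes "subseq t (concat (map f u))"
  obtains v where "subseq v u" "length v \<le> length t" "subseq t (concat (map f v))"
  using assms
proof (induction u arbitrary: t thesis)
  case Nil
  then have "t = []" by simp
  then show ?case using Nil.prems(1)[of "[]"] by simp
next
  case (Cons x u)
  from Cons.prems(2) obtain t1 t2 where
    t: "t = t1 @ t2" "subseq t1 (f x)" "subseq t2 (concat (map f u))"
    by (auto elim: subseq_appendE)
  obtain v where v: "subseq v u" "length v \<le> length t2" "subseq t2 (concat (map f v))"
    using Cons.IH[OF _ t(3)] by blast
  show ?case
  proof (cases "t1 = []")
    case True
    then show ?thesis using v t Cons.prems(1)[of v] by auto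
  next
    case False
    then have "length (x # v) \<le> length t" using t v by (cases t1) auto
    then show ?thesis
      using t v Cons.prems(1)[of "x # v"] by (simp add: list_emb_append_mono)
  qed
qed

lemma subseq_concat_map_if_short_subseqs:
  assumes "\<And>s. length s \<le> n \<Longrightarrow> subseq s w \<Longrightarrow> subseq s w'"
    and "length t \<le> n" and "subseq t (concat (map f w))"
  shows "subseq t (concat (map f w'))"
proof -
  obtain v where v: "subseq v w" "length v \<le> length t" "subseq t (concat (map f v))"
    using subseq_concat_mapE[OF assms(3)] .
  have "subseq v w'" using assms(1)[OF _ v(1)] v(2) assms(2) by simp
  then have "subseq (concat (map f v)) (concat (map f w'))" by (rule subseq_concat_map)
  then show ?thesis using v(3) by (metis subseq_order.trans)
qed

section \<open>Decreasing subsequences determine the elements of Kis_n\<close>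

definition dec_subseqs :: "nat list \<Rightarrow> nat list set" where
  "dec_subseqs w = {s. sorted_wrt (>) s \<and> subseq s w}"

definition dec_subseqs_step :: "nat list set \<Rightarrow> nat \<Rightarrow> nat list set" where
  "dec_subseqs_step S a = S \<union> {s @ [a] | s. s \<in> S \<and> (\<forall>x\<in>set s. a < x)}"

lemma subseq_snoc_iff:
  "subseq s (w @ [a]) \<longleftrightarrow> subseq s w \<or> (\<exists>s'. s = s' @ [a] \<and> subseq s' w)"
proof
  assume "subseq s (w @ [a])"
  then obtain s1 s2 where "s = s1 @ s2" "subseq s1 w" "subseq s2 [a]"
    by (auto elim: subseq_appendE)
  moreover have "s2 = [] \<or> s2 = [a]" using \<open>subseq s2 [a]\<close>
    by (cases s2) (auto split: if_splits)
  ultimately show "subseq s w \<or> (\<exists>s'. s = s' @ [a] \<and> subseq s' w)" by auto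
next
  assume "subseq s w \<or> (\<exists>s'. s = s' @ [a] \<and> subseq s' w)"
  then show "subseq s (w @ [a])" by (auto intro: list_emb_prefix list_emb_append_mono)
qed

lemma dec_subseqs_append: "dec_subseqs (w @ u) = foldl dec_subseqs_step (dec_subseqs w) u"
proof (induction u rule: rev_induct)
  case Nil
  then show ?case by simp
next
  case (snoc a u)
  have "dec_subseqs ((w @ u) @ [a]) = dec_subseqs_step (dec_subseqs (w @ u)) a"
    unfolding dec_subseqs_def dec_subseqs_step_def subseq_snoc_iff
    by (auto simp: sorted_wrt_append)
  then show ?case using snoc by simp
qed

lemma dec_subseqs_step_idem: "dec_subseqs_step (dec_subseqs_step S i) i = dec_subseqs_step S i"
  unfolding dec_subseqs_step_def by auto

lemma dec_subseqs_step_iji: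
  "i < j \<Longrightarrow> dec_subseqs_step (dec_subseqs_step (dec_subseqs_step S i) j) i
    = dec_subseqs_step (dec_subseqs_step S j) i"
  unfolding dec_subseqs_step_def by (auto; fastforce)

lemma dec_subseqs_step_jij:
  "i < j \<Longrightarrow> dec_subseqs_step (dec_subseqs_step (dec_subseqs_step S j) i) j
    = dec_subseqs_step (dec_subseqs_step S j) i"
  unfolding dec_subseqs_step_def by (auto; fastforce)

lemma foldl_dec_subseqs_step_kis_rel:
  "(l, r) \<in> kis_rel n \<Longrightarrow> foldl dec_subseqs_step S l = foldl dec_subseqs_step S r"
  unfolding kis_rel_def
  using dec_subseqs_step_idem dec_subseqs_step_iji dec_subseqs_step_jij by auto

lemma dec_subseqs_pres_eq: "pres_eq (kis_rel n) u v \<Longrightarrow> dec_subseqs u = dec_subseqs v"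
proof (induction rule: pres_eq.induct)
  case (rel l r p q)
  then show ?case
    using dec_subseqs_append[of p "l @ q"] dec_subseqs_append[of p "r @ q"]
      foldl_dec_subseqs_step_kis_rel[OF rel]
    by simp
qed simp_all

lemma kis_idem:
  "1 \<le> i \<Longrightarrow> i \<le> n \<Longrightarrow> pres_eq (kis_rel n) (p @ [i, i] @ q) (p @ [i] @ q)"
  by (rule pres_eq.rel) (auto simp: kis_rel_def)

lemma kis_iji:
  "1 \<le> i \<Longrightarrow> i < j \<Longrightarrow> j \<le> n \<Longrightarrow>
    pres_eq (kis_rel n) (p @ [i, j, i] @ q) (p @ [j, i] @ q)"
  by (rule pres_eq.rel) (auto simp: kis_rel_def)

lemma kis_jij:
  "1 \<le> i \<Longrightarrow> i < j \<Longrightarrow> j \<le> n \<Longrightarrow>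
    pres_eq (kis_rel n) (p @ [j, i, j] @ q) (p @ [j, i] @ q)"
  by (rule pres_eq.rel) (auto simp: kis_rel_def)

lemma kis_absorb_last:
  assumes "\<forall>x\<in>set v. 1 \<le> x \<and> x < i" "1 \<le> i" "i \<le> n"
  shows "pres_eq (kis_rel n) (i # v @ [i]) (i # v)"
  using assms(1)
proof (induction v rule: rev_induct)
  case Nil
  then show ?case using kis_idem[of i n "[]" "[]"] assms by simp
next
  case (snoc b v)
  then have IH: "pres_eq (kis_rel n) (i # v @ [i]) (i # v)" and b: "1 \<le> b" "b < i" by auto
  have "pres_eq (kis_rel n) ((i # v) @ [b, i]) ((i # v @ [i]) @ [b, i])"
    using pres_eq_append_context[OF pres_eq.sym[OF IH], of "[]" "[b, i]"] by simp
  also have "pres_eq (kis_rel n) \<dots> ((i # v) @ [i, b])"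
    using kis_jij[of b i n "i # v" "[]"] b assms by simp
  also have "pres_eq (kis_rel n) \<dots> ((i # v) @ [b])"
    using pres_eq_append_context[OF IH, of "[]" "[b]"] by simp
  finally show ?case by simp
qed

lemma kis_absorb_first:
  assumes "\<forall>x\<in>set v. i < x \<and> x \<le> n" "1 \<le> i" "i \<le> n"
  shows "pres_eq (kis_rel n) (i # v @ [i]) (v @ [i])"
  using assms(1)
proof (induction v)
  case Nil
  then show ?case using kis_idem[of i n "[]" "[]"] assms by simp
next
  case (Cons b v)
  then have IH: "pres_eq (kis_rel n) (i # v @ [i]) (v @ [i])" and b: "i < b" "b \<le> n" by auto
  have "pres_eq (kis_rel n) ([i, b] @ v @ [i]) ([i, b] @ i # v @ [i])"
    using pres_eq_append_context[OF pres_eq.sym[OF IH], of "[i, b]" "[]"] by simp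
  also have "pres_eq (kis_rel n) \<dots> ([b, i] @ v @ [i])"
    using kis_iji[of i b n "[]" "v @ [i]"] b assms by simp
  also have "pres_eq (kis_rel n) \<dots> ([b] @ v @ [i])"
    using pres_eq_append_context[OF IH, of "[b]" "[]"] by simp
  finally show ?case by simp
qed

definition reduced :: "nat list \<Rightarrow> bool" where
  "reduced w \<longleftrightarrow> (\<forall>a i v z. w = a @ i # v @ i # z \<and> i \<notin> set v \<longrightarrow>
      (\<exists>x\<in>set v. x < i) \<and> (\<exists>x\<in>set v. i < x))"

lemma reduced_Cons: "reduced (c # u) \<Longrightarrow> reduced u"
  unfolding reduced_def by (metis append_Cons)

lemma kis_reduced_form_exists:
  "set w \<subseteq> {1..n} \<Longrightarrow> \<exists>r. reduced r \<and> pres_eq (kis_rel n) w r"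
proof (induction "length w" arbitrary: w rule: less_induct)
  case less
  show ?case
  proof (cases "reduced w")
    case True
    then show ?thesis using pres_eq.refl by blast
  next
    case False
    then obtain a i v z where w: "w = a @ i # v @ i # z" and "i \<notin> set v"
      and "\<not> ((\<exists>x\<in>set v. x < i) \<and> (\<exists>x\<in>set v. i < x))"
      unfolding reduced_def by blast
    then have "(\<forall>x\<in>set v. x < i) \<or> (\<forall>x\<in>set v. i < x)"
      by (metis linorder_neqE_nat)
    moreover have range: "\<forall>x\<in>set w. 1 \<le> x \<and> x \<le> n" using less.prems by auto
    ultimately obtain w' where w': "pres_eq (kis_rel n) w w'" "length w' < length w"
      "set w' \<subseteq> {1..n}"
    proof (elim disjE)
      assume "\<forall>x\<in>set v. x < i"
      then have "pres_eq (kis_rel n) (a @ (i # v @ [i]) @ z) (a @ (i # v) @ z)"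
        using pres_eq_append_context[OF kis_absorb_last] range w by auto
      then show ?thesis using w less.prems by (intro that[of "a @ (i # v) @ z"]) auto
    next
      assume "\<forall>x\<in>set v. i < x"
      then have "pres_eq (kis_rel n) (a @ (i # v @ [i]) @ z) (a @ (v @ [i]) @ z)"
        using pres_eq_append_context[OF kis_absorb_first] range w by auto
      then show ?thesis using w less.prems by (intro that[of "a @ (v @ [i]) @ z"]) auto
    qed
    then show ?thesis using less.hyps by (blast intro: pres_eq.trans)
  qed
qed

lemma subseq_Cons_first_occurrence:
  "e \<notin> set v \<Longrightarrow> subseq (e # r) (v @ e # z) \<Longrightarrow> subseq r z"
  by (induction v) (auto split: if_splits)

text \<open>Induction on e: a letter d < e between this occurrence of e and the next one exists
  by reducedness, and d followed by the witness for d is a witness for e.\<close>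

lemma reduced_dec_subseq_witness:
  "reduced (pre @ e # post) \<Longrightarrow> \<exists>t. sorted_wrt (>) t \<and> (\<forall>x\<in>set t. x < e) \<and>
      subseq t post \<and> \<not> subseq (e # t) post"
proof (induction e arbitrary: pre post rule: less_induct)
  case (less e)
  show ?case
  proof (cases "e \<in> set post")
    case False
    then show ?thesis by (intro exI[of _ "[]"]) (auto simp: subseq_singleton_left)
  next
    case True
    then obtain v z where post: "post = v @ e # z" and e: "e \<notin> set v"
      using split_list_first by metis
    have "\<exists>x\<in>set v. x < e" using less.prems post e unfolding reduced_def by blast
    then obtain d v1 v2 where d: "d < e" and v: "v = v1 @ d # v2" by (metis split_list)
    have "reduced ((pre @ e # v1) @ d # (v2 @ e # z))" using less.prems post v by simp
    then obtain t where t: "sorted_wrt (>) t" "\<forall>x\<in>set t. x < d"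
      "subseq t (v2 @ e # z)" "\<not> subseq (d # t) (v2 @ e # z)"
      using less.IH[OF d] by blast
    have "subseq (d # t) post" using t(3) post v by (simp add: subseq_drop_many)
    moreover have "\<not> subseq (e # d # t) post"
    proof
      assume "subseq (e # d # t) post"
      then have "subseq (d # t) z" using subseq_Cons_first_occurrence e post by metis
      then have "subseq (d # t) ((v2 @ [e]) @ z)" by (rule subseq_drop_many)
      then show False using t(4) by simp
    qed
    ultimately show ?thesis using t d by (intro exI[of _ "d # t"]) auto
  qed
qed

lemma dec_subseqs_Nil: "dec_subseqs [] = {[]}"
  unfolding dec_subseqs_def by auto

lemma singleton_in_dec_subseqs: "[c] \<in> dec_subseqs (c # u)"
  unfolding dec_subseqs_def by simp

lemma dec_subseqs_Cons_not_extendable: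
  assumes "reduced (c # u)" "c < b"
  shows "\<exists>s \<in> dec_subseqs (c # u). (\<forall>x\<in>set s. x < b) \<and> b # s \<notin> dec_subseqs (c # u)"
proof -
  obtain t where t: "sorted_wrt (>) t" "\<forall>x\<in>set t. x < c" "subseq t u" "\<not> subseq (c # t) u"
    using reduced_dec_subseq_witness[of "[]" c u] assms by auto
  have "c # t \<in> dec_subseqs (c # u)" using t unfolding dec_subseqs_def by auto
  moreover have "b # c # t \<notin> dec_subseqs (c # u)"
    using t(4) assms(2) unfolding dec_subseqs_def by (auto dest: subseq_Cons')
  ultimately show ?thesis using t assms(2) by (intro bexI[of _ "c # t"]) auto
qed

lemma dec_subseqs_Cons_head:
  assumes "s \<in> dec_subseqs (c # u)" "\<forall>x\<in>set s. x < c"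
  shows "c # s \<in> dec_subseqs (c # u)"
proof (cases s)
  case Nil
  then show ?thesis by (simp add: singleton_in_dec_subseqs)
next
  case (Cons x s')
  then have "x \<noteq> c" using assms(2) by auto
  then show ?thesis using assms Cons unfolding dec_subseqs_def by auto
qed

lemma dec_subseqs_Cons_head_eq:
  assumes "reduced (c # u)" "reduced (c' # u')" "dec_subseqs (c # u) = dec_subseqs (c' # u')"
  shows "c = c'"
proof -
  have "\<not> c < c'"
    if red: "reduced (c # u)" and eq: "dec_subseqs (c # u) = dec_subseqs (c' # u')"
    for c c' u u'
  proof
    assume "c < c'"
    then obtain s where s: "s \<in> dec_subseqs (c # u)" "\<forall>x\<in>set s. x < c'"
        "c' # s \<notin> dec_subseqs (c # u)"
      using dec_subseqs_Cons_not_extendable[OF red] by blast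
    have "c' # s \<in> dec_subseqs (c' # u')"
      using dec_subseqs_Cons_head s(1,2) eq by auto
    then show False using s(3) eq by simp
  qed
  then show ?thesis using assms by (metis linorder_neqE_nat)
qed

lemma dec_subseqs_Cons_iff:
  assumes "reduced (c # u)"
  shows "t \<in> dec_subseqs u \<longleftrightarrow>
    t \<in> dec_subseqs (c # u) \<and> (t \<noteq> [] \<and> hd t = c \<longrightarrow> (\<exists>b>c. b # t \<in> dec_subseqs (c # u)))"
proof (intro iffI conjI impI)
  assume t: "t \<in> dec_subseqs u"
  then show "t \<in> dec_subseqs (c # u)" unfolding dec_subseqs_def by auto
  assume "t \<noteq> [] \<and> hd t = c"
  then obtain t' where t': "t = c # t'" by (cases t) auto
  with t have dec: "sorted_wrt (>) t" and sub: "subseq (c # t') u"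
    unfolding dec_subseqs_def by auto
  then have "c \<in> set u" by (auto dest: list_emb_ConsD)
  then obtain v z where u: "u = v @ c # z" and c: "c \<notin> set v"
    using split_list_first by metis
  have "\<exists>x\<in>set v. c < x" using assms u c unfolding reduced_def
    by (metis append_Nil append_Cons)
  then obtain b v1 v2 where b: "c < b" and v: "v = v1 @ b # v2" by (metis split_list)
  have "subseq t' z" using subseq_Cons_first_occurrence c sub u by metis
  then have "subseq (b # c # t') (v1 @ b # v2 @ c # z)" by (simp add: subseq_drop_many)
  then have "subseq (b # t) u" using u v t' by simp
  then have "b # t \<in> dec_subseqs (c # u)" using dec t' b unfolding dec_subseqs_def by auto
  then show "\<exists>b>c. b # t \<in> dec_subseqs (c # u)" using b by blast
next
  assume h: "t \<in> dec_subseqs (c # u) \<and>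
    (t \<noteq> [] \<and> hd t = c \<longrightarrow> (\<exists>b>c. b # t \<in> dec_subseqs (c # u)))"
  show "t \<in> dec_subseqs u"
  proof (cases "t \<noteq> [] \<and> hd t = c")
    case True
    then obtain b where "b # t \<in> dec_subseqs (c # u)" "b > c" using h by blast
    then have "subseq (b # t) u" unfolding dec_subseqs_def by auto
    then show ?thesis using h unfolding dec_subseqs_def by (auto dest: subseq_Cons')
  next
    case False
    then show ?thesis using h unfolding dec_subseqs_def by (cases t) auto
  qed
qed

lemma reduced_eq_if_dec_subseqs_eq:
  "reduced w \<Longrightarrow> reduced w' \<Longrightarrow> dec_subseqs w = dec_subseqs w' \<Longrightarrow> w = w'"
proof (induction w arbitrary: w')
  case Nil
  then show ?case using singleton_in_dec_subseqs dec_subseqs_Nil by (cases w') auto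
next
  case (Cons c u)
  then obtain c' u' where w': "w' = c' # u'"
    using singleton_in_dec_subseqs dec_subseqs_Nil by (cases w') force+
  have c: "c = c'" using dec_subseqs_Cons_head_eq Cons.prems w' by blast
  have "dec_subseqs u = dec_subseqs u'"
    using dec_subseqs_Cons_iff[OF Cons.prems(1)] dec_subseqs_Cons_iff[of c' u'] Cons.prems(2,3) w' c
    by auto
  then have "u = u'" using Cons.IH reduced_Cons Cons.prems w' by blast
  then show ?case using w' c by simp
qed

lemma length_dec_le:
  assumes "sorted_wrt (>) s" "set s \<subseteq> {1..n}"
  shows "length s \<le> n"
proof -
  have "distinct s" using assms(1) by (induction s) auto
  then have "length s = card (set s)" by (simp add: distinct_card)
  also have "\<dots> \<le> card {1..n}" using assms(2) by (intro card_mono) auto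
  finally show ?thesis by simp
qed

lemma set_mono_subseq: "subseq xs ys \<Longrightarrow> set xs \<subseteq> set ys"
  by (induction rule: list_emb.induct) auto

lemma dec_subseqs_subset_if_short_subseqs:
  assumes "set u \<subseteq> {1..n}" and "\<And>s. length s \<le> n \<Longrightarrow> subseq s u \<Longrightarrow> subseq s v"
  shows "dec_subseqs u \<subseteq> dec_subseqs v"
proof
  fix s
  assume s: "s \<in> dec_subseqs u"
  then have "set s \<subseteq> {1..n}" using assms(1) set_mono_subseq unfolding dec_subseqs_def by blast
  then have "length s \<le> n" using s length_dec_le unfolding dec_subseqs_def by blast
  then show "s \<in> dec_subseqs v" using s assms(2) unfolding dec_subseqs_def by blast
qed

lemma kis_eq_if_short_subseqs_eq:
  assumes "set u \<subseteq> {1..n}" "set v \<subseteq> {1..n}"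
    and "\<And>s. length s \<le> n \<Longrightarrow> subseq s u \<longleftrightarrow> subseq s v"
  shows "pres_eq (kis_rel n) u v"
proof -
  have "dec_subseqs u = dec_subseqs v"
    using dec_subseqs_subset_if_short_subseqs[of u n v] dec_subseqs_subset_if_short_subseqs[of v n u]
      assms by blast
  obtain ru where ru: "reduced ru" "pres_eq (kis_rel n) u ru"
    using kis_reduced_form_exists assms(1) by blast
  obtain rv where rv: "reduced rv" "pres_eq (kis_rel n) v rv"
    using kis_reduced_form_exists assms(2) by blast
  have "dec_subseqs ru = dec_subseqs rv"
    using dec_subseqs_pres_eq[OF ru(2)] dec_subseqs_pres_eq[OF rv(2)]
      \<open>dec_subseqs u = dec_subseqs v\<close>
    by simp
  then have "ru = rv" using reduced_eq_if_dec_subseqs_eq ru(1) rv(1) by blast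
  then show ?thesis using ru(2) pres_eq.sym[OF rv(2)] by (blast intro: pres_eq.trans)
qed

lemma identity_holds_cat_imp_kis:
  fixes w w' :: "'x list"
  assumes "identity_holds (cat_rel n) n w w'"
  shows "identity_holds (kis_rel n) n w w'"
  unfolding identity_holds_def
proof (intro allI impI)
  fix \<sigma> :: "'x \<Rightarrow> nat list"
  assume range: "\<forall>x. set (\<sigma> x) \<subseteq> {1..n}"
  have short: "\<And>s. length s \<le> n \<Longrightarrow> subseq s w \<longleftrightarrow> subseq s w'"
    using cat_identity_subseq_iff[OF assms] .
  show "pres_eq (kis_rel n) (concat (map \<sigma> w)) (concat (map \<sigma> w'))"
  proof (rule kis_eq_if_short_subseqs_eq)
    show "set (concat (map \<sigma> w)) \<subseteq> {1..n}" "set (concat (map \<sigma> w')) \<subseteq> {1..n}"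
      using range by auto
    fix s :: "nat list"
    assume "length s \<le> n"
    then show "subseq s (concat (map \<sigma> w)) \<longleftrightarrow> subseq s (concat (map \<sigma> w'))"
      using subseq_concat_map_if_short_subseqs[of n w w' s \<sigma>]
        subseq_concat_map_if_short_subseqs[of n w' w s \<sigma>] short
      by blast
  qed
qed

theorem theorem1:
  fixes n :: nat and w w' :: "'x list"
  assumes "n \<ge> 2"
  shows "(identity_holds (cat_rel n) n w w' \<longleftrightarrow> identity_holds (styl_rel n) n w w')
       \<and> (identity_holds (styl_rel n) n w w' \<longleftrightarrow> identity_holds (kis_rel n) n w w')"
proof -
  have "identity_holds (kis_rel n) n w w' \<Longrightarrow> identity_holds (styl_rel n) n w w'"
    by (rule identity_holds_mono[OF kis_rel_holds_in_styl])
  moreover have "identity_holds (styl_rel n) n w w' \<Longrightarrow> identity_holds (cat_rel n) n w w'"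
    by (rule identity_holds_mono[OF styl_rel_holds_in_cat])
  moreover have "identity_holds (cat_rel n) n w w' \<Longrightarrow> identity_holds (kis_rel n) n w w'"
    by (rule identity_holds_cat_imp_kis)
  ultimately show ?thesis by blast
qed

end
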